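(* Let $Z=C_0\cup C_1$ be a Tychonoff space such that (1) $C_0\cap C_1=\emptyset$; (2) $C_0$ is an open $F_\sigma$ subset of $Z$; (3) both $C_0$ and $C_1$ (with the subspace topologies) are $\Delta$-spaces. Then $Z$ is a $\Delta$-space.
   Context: A topological space $X$ is a $\Delta$-space if for every decreasing sequence $\{D_n:n\in\omega\}$ of subsets of $X$ with $\bigcap_n D_n=\emptyset$ there is a decreasing sequence $\{V_n:n\in\omega\}$ of open subsets of $X$ with $D_n\subseteq V_n$ for all $n$ and $\bigcap_n V_n=\emptyset$. *)

theory Defs
  imports "HOL-Analysis.Analysis"
begin

definition tychonoff_space :: "'a topology \<Rightarrow> bool" where
  "tychonoff_space X \<longleftrightarrow> completely_regular_space X \<and> t1_space X"

definition delta_space :: "'a topology \<Rightarrow> bool" where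
  "delta_space X \<longleftrightarrow>
     (\<forall>D :: nat \<Rightarrow> 'a set.
        (\<forall>n. D n \<subseteq> topspace X) \<and> decseq D \<and> (\<Inter>n. D n) = {}
        \<longrightarrow> (\<exists>V :: nat \<Rightarrow> 'a set. (\<forall>n. openin X (V n)) \<and> decseq V \<and>
                (\<forall>n. D n \<subseteq> V n) \<and> (\<Inter>n. V n) = {}))"

end

theory Submission
  imports Defs
begin

text \<open>Write \<open>C\<^sub>0 = \<Union>\<^sub>n F\<^sub>n\<close> with \<open>F\<^sub>n\<close> closed and increasing. Given a decreasing \<open>D\<^sub>n\<close> with
  empty intersection, expand the traces \<open>D\<^sub>n \<inter> C\<^sub>i\<close> inside the \<open>\<Delta>\<close>-spaces \<open>C\<^sub>i\<close> to decreasing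
  open sets \<open>U\<^sub>n\<close> and \<open>W\<^sub>n\<close> of the whole space whose traces on \<open>C\<^sub>0\<close>, resp. \<open>C\<^sub>1\<close>, have empty
  intersection. Then \<open>(U\<^sub>n \<inter> C\<^sub>0) \<union> (W\<^sub>n - F\<^sub>n)\<close> is open, decreasing and contains \<open>D\<^sub>n\<close>. A
  common point would lie in \<open>C\<^sub>0\<close>, hence in some \<open>F\<^sub>k\<close> and so in all \<open>U\<^sub>n\<close>, or in \<open>C\<^sub>1\<close> and in
  all \<open>W\<^sub>n\<close>; both are impossible.\<close>

lemma delta_space_subtopology_expand:
  assumes delta: "delta_space (subtopology X S)"
    and D: "\<And>n. D n \<subseteq> topspace X" "decseq D" "(\<Inter>n. D n) = {}"
  obtains W where "\<And>n. openin X (W n)" "decseq W" "\<And>n. D n \<inter> S \<subseteq> W n"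
    "(\<Inter>n. W n \<inter> S) = {}"
proof -
  have "\<forall>n. D n \<inter> S \<subseteq> topspace (subtopology X S)" "(\<Inter>n. D n \<inter> S) = {}"
    using D(1,3) by auto
  moreover have "decseq (\<lambda>n. D n \<inter> S)"
    using D(2) unfolding decseq_def by blast
  ultimately obtain V where V: "\<And>n. openin (subtopology X S) (V n)" "decseq V"
      "\<And>n. D n \<inter> S \<subseteq> V n" "(\<Inter>n. V n) = {}"
    using delta unfolding delta_space_def by meson
  obtain W' where W': "\<And>n. openin X (W' n)" "\<And>n. V n = W' n \<inter> S"
    using V(1) unfolding openin_subtopology by metis
  \<comment> \<open>the \<open>W' n\<close> need not decrease, so pass to finite intersections\<close>
  define W where "W n = (\<Inter>k\<in>{..n}. W' k)" for n
  show thesis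
  proof
    show "openin X (W n)" for n
      unfolding W_def by (intro openin_Inter) (auto simp: W')
    show "decseq W"
      unfolding W_def decseq_def by auto
    show "D n \<inter> S \<subseteq> W n" for n
    proof -
      have "V n \<subseteq> W' k" if "k \<le> n" for k
        using decseqD[OF V(2) that] W'(2)[of k] by blast
      then show ?thesis
        using V(3)[of n] unfolding W_def by blast
    qed
    have "W n \<inter> S \<subseteq> V n" for n
      unfolding W_def W'(2)[of n] by blast
    then show "(\<Inter>n. W n \<inter> S) = {}"
      using V(4) by blast
  qed
qed

lemma delta_space_open_fsigma_union:
  assumes cover: "topspace X = C0 \<union> C1"
    and C0: "openin X C0" "fsigma_in X C0"
    and delta0: "delta_space (subtopology X C0)"
    and delta1: "delta_space (subtopology X C1)"
  shows "delta_space X"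
  unfolding delta_space_def
proof (intro allI impI, elim conjE)
  fix D :: "nat \<Rightarrow> 'a set"
  assume D: "\<forall>n. D n \<subseteq> topspace X" "decseq D" "(\<Inter>n. D n) = {}"
  obtain F where F: "\<And>n. closedin X (F n)" "incseq F" "(\<Union>n. F n) = C0"
    using C0(2) unfolding fsigma_in_ascending incseq_Suc_iff by metis
  obtain U where U: "\<And>n. openin X (U n)" "decseq U" "\<And>n. D n \<inter> C0 \<subseteq> U n"
      "(\<Inter>n. U n \<inter> C0) = {}"
    using delta_space_subtopology_expand[OF delta0] D by metis
  obtain W where W: "\<And>n. openin X (W n)" "decseq W" "\<And>n. D n \<inter> C1 \<subseteq> W n"
      "(\<Inter>n. W n \<inter> C1) = {}"
    using delta_space_subtopology_expand[OF delta1] D by metis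
  define Q where "Q n = (U n \<inter> C0) \<union> (W n - F n)" for n
  show "\<exists>Q. (\<forall>n. openin X (Q n)) \<and> decseq Q \<and> (\<forall>n. D n \<subseteq> Q n) \<and> (\<Inter>n. Q n) = {}"
  proof (intro exI conjI allI)
    show "openin X (Q n)" for n
      unfolding Q_def using U(1) W(1) F(1) C0(1) by (intro openin_Un openin_Int openin_diff)
    show "decseq Q"
      unfolding decseq_def
    proof (intro allI impI)
      fix m n :: nat
      assume "m \<le> n"
      then have "U n \<subseteq> U m" "W n \<subseteq> W m" "F m \<subseteq> F n"
        using U(2) W(2) F(2) by (auto dest: decseqD incseqD)
      then show "Q n \<subseteq> Q m"
        unfolding Q_def by blast
    qed
    show "D n \<subseteq> Q n" for n
    proof
      fix x
      assume x: "x \<in> D n"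
      show "x \<in> Q n"
      proof (cases "x \<in> C0")
        case True
        then show ?thesis using U(3)[of n] x unfolding Q_def by blast
      next
        case False
        then have "x \<in> C1"
          using x D(1) cover by blast
        moreover have "x \<notin> F n"
          using False F(3) by blast
        ultimately show ?thesis
          using x W(3)[of n] unfolding Q_def by blast
      qed
    qed
    show "(\<Inter>n. Q n) = {}"
    proof (rule ccontr)
      assume "(\<Inter>n. Q n) \<noteq> {}"
      then obtain x where x: "\<And>n. x \<in> Q n" by blast
      show False
      proof (cases "x \<in> C0")
        case True
        then obtain k where k: "x \<in> F k" using F(3) by blast
        \<comment> \<open>from stage \<open>k\<close> on, \<open>x\<close> is excluded from \<open>W n - F n\<close>\<close>
        have "x \<in> U n" for n
        proof -
          have "x \<in> F (max n k)"
            using k incseqD[OF F(2), of k "max n k"] by auto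
          then have "x \<in> U (max n k)"
            using x[of "max n k"] unfolding Q_def by blast
          then show ?thesis
            using decseqD[OF U(2), of n "max n k"] by auto
        qed
        then show False using U(4) True by blast
      next
        case False
        have "x \<in> W n" for n
          using x[of n] False unfolding Q_def by blast
        moreover have "x \<in> C1"
          using calculation[of 0] openin_subset[OF W(1)[of 0]] cover False by blast
        ultimately show False using W(4) by blast
      qed
    qed
  qed
qed

theorem theorem3p8:
  fixes Z :: "'a topology" and C0 C1 :: "'a set"
  assumes "tychonoff_space Z"
    and "topspace Z = C0 \<union> C1"
    and "C0 \<inter> C1 = {}"
    and "openin Z C0"
    and "fsigma_in Z C0"
    and "delta_space (subtopology Z C0)"
    and "delta_space (subtopology Z C1)"
  shows "delta_space Z"
  using delta_space_open_fsigma_union assms(2,4-7) by blast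

end
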